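(* Let $P$ be a poset. Let $F_P:\mathbf{JF}_P\to\mathbf{JC}_P$ be the functor sending a frame-generating join-specification $\mathcal{U}$ to the join-completion $\eta:P\to\mathcal{I}_{\mathcal{U}}$, $p\mapsto p^\downarrow$, and sending an inclusion $\mathcal{U}_1\subseteq\mathcal{U}_2$ to the unique frame morphism $\mathcal{I}_{\mathcal{U}_1}\to\mathcal{I}_{\mathcal{U}_2}$ with $p^\downarrow\mapsto p^\downarrow$. Let $G_P:\mathbf{JC}_P\to\mathbf{JF}_P$ send a join-completion $e$ to $(\mathcal{U}_e)^-$ and an arrow $e_1\to e_2$ to the inclusion $(\mathcal{U}_{e_1})^-\subseteq(\mathcal{U}_{e_2})^-$. Then $F_P$ is left adjoint to $G_P$.
   Context: A join-specification for $P$ is a set $\mathcal{U}\subseteq\wp(P)$ such that $\bigvee S$ exists in $P$ for every $S\in\mathcal{U}$ and $\{p\}\in\mathcal{U}$ for every $p\in P$. A $\mathcal{U}$-ideal is a down-closed $C\subseteq P$ with $\bigvee S\in C$ whenever $S\in\mathcal{U}$, $S\subseteq C$; $\mathcal{I}_{\mathcal{U}}$ is the complete lattice of $\mathcal{U}$-ideals under inclusion; $\mathcal{U}$ is frame-generating if $\mathcal{I}_{\mathcal{U}}$ is a frame. A frame morphism is a lattice homomorphism preserving arbitrary joins. $\mathbf{JF}_P$ is the poset (thin category) of frame-generating join-specifications for $P$ under inclusion. A join-completion of $P$ is an order embedding $e:P\to L$ into a complete lattice $L$ such that every $x\in L$ is the join of $\{e(p):e(p)\le x\}$. $\mathbf{JC}_P$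 is the category whose objects are join-completions of $P$ and whose arrows $e_1\to e_2$ (for $e_i:P\to L_i$) are completely join-preserving maps $f:L_1\to L_2$ with $f\circ e_1=e_2$. For a join-completion $e:P\to L$, $\mathcal{U}_e=\{S\subseteq P:\bigvee S\text{ exists in }P\text{ and }e(\bigvee S)=\bigvee e[S]\}$ (equivalently $\bigvee S\in\Gamma_e(S)$, where $\Gamma_e$ is the closure operator whose closed sets are the sets $e^{-1}(x^\downarrow)$, $x\in L$). For a join-specification $\mathcal{V}$, $\mathcal{V}^-$ is the largest frame-generating join-specification contained in $\mathcal{V}$ (which exists). *)

theory Defs
  imports Main
begin

definition is_join :: "'a::order set \<Rightarrow> 'a \<Rightarrow> bool" where
  "is_join S s \<longleftrightarrow> (\<forall>x\<in>S. x \<le> s) \<and> (\<forall>y. (\<forall>x\<in>S. x \<le> y) \<longrightarrow> s \<le> y)"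

definition has_join :: "'a::order set \<Rightarrow> bool" where
  "has_join S \<longleftrightarrow> (\<exists>s. is_join S s)"

definition pjoin :: "'a::order set \<Rightarrow> 'a" where
  "pjoin S = (THE s. is_join S s)"

definition down :: "'a::order \<Rightarrow> 'a set" where
  "down p = {x. x \<le> p}"

definition join_spec :: "'a::order set set \<Rightarrow> bool" where
  "join_spec U \<longleftrightarrow> (\<forall>S\<in>U. has_join S) \<and> (\<forall>p. {p} \<in> U)"

definition U_ideal :: "'a::order set set \<Rightarrow> 'a set \<Rightarrow> bool" where
  "U_ideal U C \<longleftrightarrow> (\<forall>x y. x \<in> C \<longrightarrow> y \<le> x \<longrightarrow> y \<in> C)
                   \<and> (\<forall>S\<in>U. S \<subseteq> C \<longrightarrow> pjoin S \<in> C)"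

definition ideals :: "'a::order set set \<Rightarrow> 'a set set" where
  "ideals U = {C. U_ideal U C}"

text \<open>Join in a family of sets ordered by inclusion and closed under arbitrary
  intersections (as the family of U-ideals is): least member containing the union.\<close>
definition sup_in :: "'a set set \<Rightarrow> 'a set set \<Rightarrow> 'a set" where
  "sup_in L X = \<Inter>{C\<in>L. \<Union>X \<subseteq> C}"

definition frame_generating :: "'a::order set set \<Rightarrow> bool" where
  "frame_generating U \<longleftrightarrow> join_spec U \<and>
     (\<forall>a\<in>ideals U. \<forall>B\<subseteq>ideals U.
        a \<inter> sup_in (ideals U) B = sup_in (ideals U) ((\<lambda>b. a \<inter> b) ` B))"

definition join_completion :: "('a::order \<Rightarrow> 'b::complete_lattice) \<Rightarrow> bool" where
  "join_completion e \<longleftrightarrow> (\<forall>x y. e x \<le> e y \<longleftrightarrow> x \<le> y)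
                         \<and> (\<forall>x. x = Sup {e p | p. e p \<le> x})"

definition U_of :: "('a::order \<Rightarrow> 'b::complete_lattice) \<Rightarrow> 'a set set" where
  "U_of e = {S. has_join S \<and> e (pjoin S) = Sup (e ` S)}"

definition fg_core :: "'a::order set set \<Rightarrow> 'a set set" where
  "fg_core V = (THE W. frame_generating W \<and> W \<subseteq> V \<and>
                      (\<forall>W'. frame_generating W' \<and> W' \<subseteq> V \<longrightarrow> W' \<subseteq> W))"

text \<open>Arrows in JC_P from F_P(U) = (eta : P \<rightarrow> I_U, p \<mapsto> down p) to e : P \<rightarrow> L:
  completely join-preserving maps f : I_U \<rightarrow> L with f (down p) = e p.
  (Maps are compared only on the carrier I_U.)\<close>
definition jc_arrow_from_F ::
  "'a::order set set \<Rightarrow> ('a \<Rightarrow> 'b::complete_lattice) \<Rightarrow> ('a set \<Rightarrow> 'b) \<Rightarrow> bool" where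
  "jc_arrow_from_F U e f \<longleftrightarrow>
     (\<forall>X\<subseteq>ideals U. f (sup_in (ideals U) X) = Sup (f ` X))
     \<and> (\<forall>p. f (down p) = e p)"

end

theory Submission
  imports Defs
begin

(* A U-ideal is the join of the principal ideals of its elements, so an arrow f from
   the completion p \<mapsto> down p to e is forced to be C \<mapsto> \<Squnion>e[C]; this map preserves
   joins exactly when e preserves the joins prescribed by U, i.e. when U \<subseteq> U_e.
   On the other side, U is frame-generating iff the distributive law holds locally,
   between a principal ideal down p and the generators down s (s \<in> S) of a join
   prescribed by U.  That local law survives unions, so U_e^- is the union of all
   frame-generating specifications inside U_e, and a frame-generating U lies in U_e^-
   as soon as it lies in U_e. *)

lemma mem_down_iff [simp]: "x \<in> down p \<longleftrightarrow> x \<le> p"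
  by (simp add: down_def)

lemma is_join_unique: "is_join S a \<Longrightarrow> is_join S b \<Longrightarrow> a = b"
  unfolding is_join_def by (meson order.antisym)

lemma pjoin_is_join: "has_join S \<Longrightarrow> is_join S (pjoin S)"
  unfolding has_join_def pjoin_def by (metis is_join_unique theI)

lemma pjoin_upper: "has_join S \<Longrightarrow> x \<in> S \<Longrightarrow> x \<le> pjoin S"
  using pjoin_is_join is_join_def by blast

lemma pjoin_least: "has_join S \<Longrightarrow> (\<And>x. x \<in> S \<Longrightarrow> x \<le> y) \<Longrightarrow> pjoin S \<le> y"
  using pjoin_is_join[of S] unfolding is_join_def by blast

lemma is_join_singleton: "is_join {p} p"
  unfolding is_join_def by auto

lemma has_join_singleton: "has_join {p}"
  using is_join_singleton has_join_def by blast

lemma pjoin_singleton [simp]: "pjoin {p} = p"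
  using is_join_singleton pjoin_is_join has_join_singleton is_join_unique by blast

lemma join_spec_has_join: "join_spec U \<Longrightarrow> S \<in> U \<Longrightarrow> has_join S"
  unfolding join_spec_def by blast

lemma join_spec_between:
  assumes "join_spec V" and "range (\<lambda>p. {p}) \<subseteq> W" and "W \<subseteq> V"
  shows "join_spec W"
  using assms unfolding join_spec_def by blast

definition ideal_hull :: "'a::order set set \<Rightarrow> 'a set \<Rightarrow> 'a set" where
  "ideal_hull U A = \<Inter>{C. U_ideal U C \<and> A \<subseteq> C}"

lemma sup_in_ideals_eq_hull: "sup_in (ideals U) X = ideal_hull U (\<Union>X)"
  unfolding sup_in_def ideal_hull_def ideals_def by auto

lemma U_ideal_downward: "U_ideal U C \<Longrightarrow> x \<in> C \<Longrightarrow> y \<le> x \<Longrightarrow> y \<in> C"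
  unfolding U_ideal_def by blast

lemma U_ideal_pjoin: "U_ideal U C \<Longrightarrow> S \<in> U \<Longrightarrow> S \<subseteq> C \<Longrightarrow> pjoin S \<in> C"
  unfolding U_ideal_def by blast

lemma U_ideal_Inter: "(\<And>C. C \<in> F \<Longrightarrow> U_ideal U C) \<Longrightarrow> U_ideal U (\<Inter>F)"
  unfolding U_ideal_def by (simp add: subset_iff) blast

lemma U_ideal_Int: "U_ideal U a \<Longrightarrow> U_ideal U b \<Longrightarrow> U_ideal U (a \<inter> b)"
  using U_ideal_Inter[of "{a, b}" U] by auto

lemma U_ideal_antimono: "W \<subseteq> U \<Longrightarrow> U_ideal U C \<Longrightarrow> U_ideal W C"
  unfolding U_ideal_def by blast

lemma U_ideal_ideal_hull: "U_ideal U (ideal_hull U A)"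
  unfolding ideal_hull_def by (rule U_ideal_Inter) auto

lemma ideal_hull_subset: "A \<subseteq> ideal_hull U A"
  unfolding ideal_hull_def by auto

lemma ideal_hull_least: "U_ideal U C \<Longrightarrow> A \<subseteq> C \<Longrightarrow> ideal_hull U A \<subseteq> C"
  unfolding ideal_hull_def by auto

lemma ideal_hull_id: "U_ideal U C \<Longrightarrow> ideal_hull U C = C"
  using ideal_hull_subset ideal_hull_least by blast

lemma ideal_hull_mono_spec: "W \<subseteq> U \<Longrightarrow> ideal_hull W A \<subseteq> ideal_hull U A"
  by (intro ideal_hull_least U_ideal_antimono[OF _ U_ideal_ideal_hull] ideal_hull_subset)

lemma U_ideal_down: "join_spec U \<Longrightarrow> U_ideal U (down q)"
  unfolding U_ideal_def using join_spec_has_join pjoin_least by fastforce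

lemma down_image_ideals: "join_spec U \<Longrightarrow> down ` A \<subseteq> ideals U"
  using U_ideal_down by (auto simp: ideals_def)

lemma Union_down_ideal: "U_ideal U C \<Longrightarrow> \<Union>(down ` C) = C"
  using U_ideal_downward by fastforce

lemma sup_in_down_ideal: "U_ideal U C \<Longrightarrow> sup_in (ideals U) (down ` C) = C"
  by (simp add: sup_in_ideals_eq_hull Union_down_ideal ideal_hull_id)

lemma sup_in_down_pjoin:
  assumes U: "join_spec U" and S: "S \<in> U"
  shows "sup_in (ideals U) (down ` S) = down (pjoin S)"
proof
  have S_join: "has_join S"
    using U S by (rule join_spec_has_join)
  show "sup_in (ideals U) (down ` S) \<subseteq> down (pjoin S)"
    unfolding sup_in_ideals_eq_hull
    by (rule ideal_hull_least[OF U_ideal_down[OF U]])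
       (auto intro: order_trans[OF _ pjoin_upper[OF S_join]])
  have "S \<subseteq> ideal_hull U (\<Union>(down ` S))"
    using ideal_hull_subset[of "\<Union>(down ` S)" U] by force
  then have "pjoin S \<in> ideal_hull U (\<Union>(down ` S))"
    using U_ideal_ideal_hull S by (rule U_ideal_pjoin[rotated 2])
  then show "down (pjoin S) \<subseteq> sup_in (ideals U) (down ` S)"
    unfolding sup_in_ideals_eq_hull using U_ideal_downward[OF U_ideal_ideal_hull]
    by auto
qed

(* The frame law a \<inter> \<Squnion>B = \<Squnion>{a \<inter> b | b \<in> B}, tested only for a = down p and
   B = down ` S with S \<in> U and p \<le> \<Squnion>S. *)
definition locally_distributive :: "'a::order set set \<Rightarrow> bool" where
  "locally_distributive U \<longleftrightarrow>
     (\<forall>S\<in>U. \<forall>p. p \<le> pjoin S \<longrightarrow> p \<in> ideal_hull U (\<Union>s\<in>S. down p \<inter> down s))"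

lemma frame_generating_imp_locally_distributive:
  assumes fg: "frame_generating U"
  shows "locally_distributive U"
  unfolding locally_distributive_def
proof (intro ballI allI impI)
  fix S p assume S: "S \<in> U" and p: "p \<le> pjoin S"
  have U: "join_spec U"
    using fg frame_generating_def by blast
  have "p \<in> down p \<inter> sup_in (ideals U) (down ` S)"
    using sup_in_down_pjoin[OF U S] p by simp
  also have "\<dots> = sup_in (ideals U) ((\<inter>) (down p) ` down ` S)"
    using fg down_image_ideals[OF U] unfolding frame_generating_def by blast
  also have "\<dots> = ideal_hull U (\<Union>s\<in>S. down p \<inter> down s)"
    by (simp add: sup_in_ideals_eq_hull image_image)
  finally show "p \<in> ideal_hull U (\<Union>s\<in>S. down p \<inter> down s)" .
qed

(* {x. down x \<inter> a \<subseteq> D} is the relative pseudocomplement a \<Rightarrow> D. *)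
lemma U_ideal_implication:
  assumes U: "locally_distributive U" and a: "U_ideal U a" and D: "U_ideal U D"
  shows "U_ideal U {x. down x \<inter> a \<subseteq> D}"
  unfolding U_ideal_def
proof (intro conjI allI impI ballI)
  fix x y assume "x \<in> {x. down x \<inter> a \<subseteq> D}" "y \<le> x"
  then show "y \<in> {x. down x \<inter> a \<subseteq> D}"
    by (auto intro: order_trans)
next
  fix S assume S: "S \<in> U" and S_sub: "S \<subseteq> {x. down x \<inter> a \<subseteq> D}"
  have "y \<in> D" if y: "y \<le> pjoin S" "y \<in> a" for y
  proof -
    have "(\<Union>s\<in>S. down y \<inter> down s) \<subseteq> D"
      using S_sub U_ideal_downward[OF a y(2)] by fastforce
    then have "ideal_hull U (\<Union>s\<in>S. down y \<inter> down s) \<subseteq> D"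
      by (rule ideal_hull_least[OF D])
    moreover have "y \<in> ideal_hull U (\<Union>s\<in>S. down y \<inter> down s)"
      using U S y(1) unfolding locally_distributive_def by blast
    ultimately show "y \<in> D" by blast
  qed
  then show "pjoin S \<in> {x. down x \<inter> a \<subseteq> D}"
    by auto
qed

lemma locally_distributive_Int_ideal_hull:
  assumes U: "locally_distributive U" and a: "U_ideal U a" and B: "\<And>b. b \<in> B \<Longrightarrow> U_ideal U b"
  shows "a \<inter> ideal_hull U (\<Union>B) = ideal_hull U (\<Union>b\<in>B. a \<inter> b)"
proof
  let ?D = "ideal_hull U (\<Union>b\<in>B. a \<inter> b)"
  have "\<Union>B \<subseteq> {x. down x \<inter> a \<subseteq> ?D}"
  proof (rule subsetI, rule CollectI)
    fix x assume "x \<in> \<Union>B"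
    then obtain b where b: "b \<in> B" "x \<in> b"
      by blast
    have "down x \<inter> a \<subseteq> a \<inter> b"
      using U_ideal_downward[OF B[OF b(1)] b(2)] by auto
    moreover have "a \<inter> b \<subseteq> ?D"
      using b(1) ideal_hull_subset[of "\<Union>b\<in>B. a \<inter> b" U] by blast
    ultimately show "down x \<inter> a \<subseteq> ?D"
      by (rule subset_trans)
  qed
  then have "ideal_hull U (\<Union>B) \<subseteq> {x. down x \<inter> a \<subseteq> ?D}"
    by (rule ideal_hull_least[OF U_ideal_implication[OF U a U_ideal_ideal_hull]])
  moreover have "x \<in> down x" for x :: 'a
    by simp
  ultimately show "a \<inter> ideal_hull U (\<Union>B) \<subseteq> ?D"
    by blast
  have "(\<Union>b\<in>B. a \<inter> b) \<subseteq> a \<inter> ideal_hull U (\<Union>B)"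
    using ideal_hull_subset[of "\<Union>B" U] by blast
  then show "?D \<subseteq> a \<inter> ideal_hull U (\<Union>B)"
    by (rule ideal_hull_least[OF U_ideal_Int[OF a U_ideal_ideal_hull]])
qed

lemma frame_generating_iff_locally_distributive:
  "frame_generating U \<longleftrightarrow> join_spec U \<and> locally_distributive U"
proof
  show "frame_generating U \<Longrightarrow> join_spec U \<and> locally_distributive U"
    using frame_generating_imp_locally_distributive frame_generating_def by blast
  assume U: "join_spec U \<and> locally_distributive U"
  have "a \<inter> ideal_hull U (\<Union>B) = ideal_hull U (\<Union>b\<in>B. a \<inter> b)"
    if "a \<in> ideals U" "B \<subseteq> ideals U" for a B
    using that U locally_distributive_Int_ideal_hull[of U a B] by (auto simp: ideals_def)
  with U show "frame_generating U"
    unfolding frame_generating_def sup_in_ideals_eq_hull by blast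
qed

lemma locally_distributive_Union:
  assumes "\<And>W. W \<in> F \<Longrightarrow> locally_distributive W"
  shows "locally_distributive (\<Union>F)"
  unfolding locally_distributive_def
proof (intro ballI allI impI)
  fix S p assume "S \<in> \<Union>F" and p: "p \<le> pjoin S"
  then obtain W where W: "W \<in> F" "S \<in> W"
    by blast
  then have "p \<in> ideal_hull W (\<Union>s\<in>S. down p \<inter> down s)"
    using assms p unfolding locally_distributive_def by blast
  then show "p \<in> ideal_hull (\<Union>F) (\<Union>s\<in>S. down p \<inter> down s)"
    using ideal_hull_mono_spec[of W "\<Union>F"] W(1) by blast
qed

lemma locally_distributive_singletons: "locally_distributive (range (\<lambda>p. {p}))"
  unfolding locally_distributive_def using ideal_hull_subset by fastforce

lemma fg_core_eqI:
  assumes "frame_generating W" and "W \<subseteq> V"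
    and "\<And>W'. frame_generating W' \<Longrightarrow> W' \<subseteq> V \<Longrightarrow> W' \<subseteq> W"
  shows "fg_core V = W"
  unfolding fg_core_def using assms by (intro the_equality) (auto intro: order.antisym)

lemma fg_core_eq_Union:
  assumes V: "join_spec V"
  shows "fg_core V = range (\<lambda>p. {p}) \<union> \<Union>{W. frame_generating W \<and> W \<subseteq> V}"
    (is "_ = ?W")
proof -
  have "locally_distributive ?W"
    using locally_distributive_Union[of "insert (range (\<lambda>p. {p})) {W. frame_generating W \<and> W \<subseteq> V}"]
      locally_distributive_singletons frame_generating_iff_locally_distributive
    by auto
  moreover have sub: "?W \<subseteq> V"
    using V unfolding join_spec_def by blast
  ultimately have "frame_generating ?W"
    using join_spec_between[OF V] frame_generating_iff_locally_distributive by blast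
  then show ?thesis
    by (rule fg_core_eqI[OF _ sub]) blast
qed

lemma subset_fg_core_iff:
  assumes "join_spec V" and "frame_generating U"
  shows "U \<subseteq> fg_core V \<longleftrightarrow> U \<subseteq> V"
  using assms unfolding fg_core_eq_Union[OF assms(1)] join_spec_def by blast

lemma join_spec_U_of: "join_spec (U_of e)"
  unfolding join_spec_def U_of_def by (simp add: has_join_singleton)

lemma join_completion_mono: "join_completion e \<Longrightarrow> mono e"
  unfolding join_completion_def by (simp add: monoI)

lemma jc_arrow_from_F_eq_Sup:
  assumes U: "join_spec U" and f: "jc_arrow_from_F U e f" and C: "C \<in> ideals U"
  shows "f C = Sup (e ` C)"
proof -
  have "f C = f (sup_in (ideals U) (down ` C))"
    using C sup_in_down_ideal[of U C] by (simp add: ideals_def)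
  also have "\<dots> = Sup (f ` down ` C)"
    using f down_image_ideals[OF U] unfolding jc_arrow_from_F_def by blast
  also have "\<dots> = Sup (e ` C)"
    using f unfolding jc_arrow_from_F_def by (simp add: image_image)
  finally show ?thesis .
qed

lemma jc_arrow_from_F_imp_subset_U_of:
  assumes U: "join_spec U" and f: "jc_arrow_from_F U e f"
  shows "U \<subseteq> U_of e"
proof
  fix S assume S: "S \<in> U"
  have "e (pjoin S) = f (sup_in (ideals U) (down ` S))"
    using f sup_in_down_pjoin[OF U S] unfolding jc_arrow_from_F_def by simp
  also have "\<dots> = Sup (f ` down ` S)"
    using f down_image_ideals[OF U] unfolding jc_arrow_from_F_def by blast
  also have "\<dots> = Sup (e ` S)"
    using f unfolding jc_arrow_from_F_def by (simp add: image_image)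
  finally show "S \<in> U_of e"
    using join_spec_has_join[OF U S] unfolding U_of_def by blast
qed

lemma Sup_image_ideal_hull:
  assumes e: "mono e" and U: "U \<subseteq> U_of e"
  shows "Sup (e ` ideal_hull U A) = Sup (e ` A)"
proof (rule order.antisym)
  let ?E = "{x. e x \<le> Sup (e ` A)}"
  have "U_ideal U ?E"
    unfolding U_ideal_def
  proof (intro conjI allI impI ballI)
    fix x y assume "x \<in> ?E" "y \<le> x"
    then show "y \<in> ?E"
      using e by (auto dest: monoD intro: order_trans)
  next
    fix S assume S: "S \<in> U" "S \<subseteq> ?E"
    have "e (pjoin S) = Sup (e ` S)"
      using U S(1) unfolding U_of_def by blast
    also have "\<dots> \<le> Sup (e ` A)"
      using S(2) by (auto intro: SUP_least)
    finally show "pjoin S \<in> ?E"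
      by simp
  qed
  moreover have "A \<subseteq> ?E"
    by (auto intro: SUP_upper)
  ultimately have "ideal_hull U A \<subseteq> ?E"
    by (rule ideal_hull_least)
  then show "Sup (e ` ideal_hull U A) \<le> Sup (e ` A)"
    by (auto intro: SUP_least)
  show "Sup (e ` A) \<le> Sup (e ` ideal_hull U A)"
    by (rule SUP_subset_mono[OF ideal_hull_subset order_refl])
qed

lemma jc_arrow_from_F_Sup_image:
  assumes e: "mono e" and U: "U \<subseteq> U_of e"
  shows "jc_arrow_from_F U e (\<lambda>C. Sup (e ` C))"
  unfolding jc_arrow_from_F_def
proof (intro conjI allI impI)
  fix X assume "X \<subseteq> ideals U"
  show "Sup (e ` sup_in (ideals U) X) = Sup ((\<lambda>C. Sup (e ` C)) ` X)"
    using SUP_UNION[where f = e and g = "\<lambda>C. C" and A = X]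
    by (simp add: sup_in_ideals_eq_hull Sup_image_ideal_hull[OF e U])
next
  fix p
  show "Sup (e ` down p) = e p"
    using e by (auto intro!: order.antisym SUP_least SUP_upper dest: monoD)
qed

theorem theorem5p13:
  fixes U :: "'a::order set set" and e :: "'a \<Rightarrow> 'b::complete_lattice"
  assumes "frame_generating U" and "join_completion e"
  shows "((\<exists>f. jc_arrow_from_F U e f) \<longleftrightarrow> U \<subseteq> fg_core (U_of e))
         \<and> (\<forall>f g. jc_arrow_from_F U e f \<longrightarrow> jc_arrow_from_F U e g \<longrightarrow>
                  (\<forall>C\<in>ideals U. f C = g C))"
proof -
  have U: "join_spec U"
    using assms(1) frame_generating_def by blast
  have "(\<exists>f. jc_arrow_from_F U e f) \<longleftrightarrow> U \<subseteq> U_of e"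
    using jc_arrow_from_F_imp_subset_U_of[OF U]
      jc_arrow_from_F_Sup_image[OF join_completion_mono[OF assms(2)]] by blast
  also have "\<dots> \<longleftrightarrow> U \<subseteq> fg_core (U_of e)"
    by (rule subset_fg_core_iff[OF join_spec_U_of assms(1), symmetric])
  finally show ?thesis
    using jc_arrow_from_F_eq_Sup[OF U] by metis
qed

end
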